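(* Let $\{B_i\}_{i \in I}$ be a finite family of subsets of an $n$-element set $\Omega$, let $m \in \{0,\dots,\lfloor n/2\rfloor\}$, let $R$ be a uniformly chosen random $m$-element subset of $\Omega$, and let $\mathcal{B}$ be the event that $B_i \not\subseteq R$ for all $i \in I$. Then for every $\eta \in (0,1)$, \[ \Pr(\mathcal{B}) \ge \prod_{i \in I}\left(1 - \left(\frac{(1+\eta)m}{n}\right)^{|B_i|}\right) - \exp(-\eta^2 m/4). \] *)

theory Defs
  imports "HOL-Probability.Probability"
begin

end

theory Submission
  imports Defs
begin

text \<open>Compare the uniform \<open>m\<close>-subset \<open>R\<close> with the \<open>p\<close>-random subset of \<open>\<Omega>\<close>,
  \<open>p = (1 + \<eta>) m / n\<close>. The event \<open>\<B>\<close> is a down-closed family, so by the Harris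
  inequality its \<open>p\<close>-probability is at least \<open>\<Prod>i. 1 - p ^ |B i|\<close>. On the other hand,
  by double counting, the density of a down-closed family in the \<open>k\<close>-th layer of the
  Boolean lattice decreases with \<open>k\<close>; hence the \<open>p\<close>-probability of \<open>\<B>\<close> is at most the
  density at layer \<open>m\<close>, which is \<open>Pr(\<B>)\<close>, plus the probability that a
  \<open>Bin(n, p)\<close> variable is below \<open>m\<close>, and a Chernoff bound shows the latter is at most
  \<open>exp (- \<eta>\<^sup>2 m / 4)\<close>.\<close>

definition down_closed :: "'a set set \<Rightarrow> bool" where
  "down_closed D \<longleftrightarrow> (\<forall>S T. S \<in> D \<longrightarrow> T \<subseteq> S \<longrightarrow> T \<in> D)"

lemma down_closedD: "down_closed D \<Longrightarrow> S \<in> D \<Longrightarrow> T \<subseteq> S \<Longrightarrow> T \<in> D"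
  unfolding down_closed_def by blast

lemma down_closed_Inter: "(\<And>i. i \<in> I \<Longrightarrow> down_closed (D i)) \<Longrightarrow> down_closed (\<Inter>i\<in>I. D i)"
  unfolding down_closed_def by blast

lemma down_closed_link:
  assumes "down_closed D"
  shows "down_closed {S. insert a S \<in> D}" and "{S. insert a S \<in> D} \<subseteq> D"
  using assms unfolding down_closed_def by (blast, blast)

definition subset_weight :: "'a set \<Rightarrow> real \<Rightarrow> 'a set \<Rightarrow> real" where
  "subset_weight \<Omega> p S = p ^ card S * (1 - p) ^ (card \<Omega> - card S)"

definition subset_prob :: "'a set \<Rightarrow> real \<Rightarrow> 'a set set \<Rightarrow> real" where
  "subset_prob \<Omega> p D = (\<Sum>S\<in>Pow \<Omega> \<inter> D. subset_weight \<Omega> p S)"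

lemma subset_prob_nonneg: "0 \<le> p \<Longrightarrow> p \<le> 1 \<Longrightarrow> 0 \<le> subset_prob \<Omega> p D"
  unfolding subset_prob_def subset_weight_def by (intro sum_nonneg) simp

lemma subset_prob_mono:
  assumes "finite \<Omega>" "0 \<le> p" "p \<le> 1" "D \<subseteq> E"
  shows "subset_prob \<Omega> p D \<le> subset_prob \<Omega> p E"
  unfolding subset_prob_def subset_weight_def using assms by (intro sum_mono2) auto

lemma subset_prob_empty: "subset_prob {} p D = (if {} \<in> D then 1 else 0)"
proof -
  have "Pow {} \<inter> D = (if {} \<in> D then {{}} else {})"
    by auto
  then show ?thesis
    by (simp add: subset_prob_def subset_weight_def)
qed

lemma subset_prob_insert:
  assumes "finite \<Omega>" "a \<notin> \<Omega>"
  shows "subset_prob (insert a \<Omega>) p D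
           = (1 - p) * subset_prob \<Omega> p D + p * subset_prob \<Omega> p {S. insert a S \<in> D}"
proof -
  let ?w = "subset_weight (insert a \<Omega>) p"
  let ?C = "Pow \<Omega> \<inter> {S. insert a S \<in> D}"
  have split: "Pow (insert a \<Omega>) \<inter> D = (Pow \<Omega> \<inter> D) \<union> insert a ` ?C"
    by (auto simp: Pow_insert)
  have disjoint: "(Pow \<Omega> \<inter> D) \<inter> insert a ` ?C = {}"
    using assms(2) by auto
  have inj: "inj_on (insert a) ?C"
    using assms(2) by (intro inj_onI) (metis IntD1 PowD insert_ident subsetD)
  have "card S \<le> card \<Omega>" and "a \<notin> S" and "finite S" if "S \<subseteq> \<Omega>" for S
    using that assms card_mono finite_subset by blast+
  then have weight_out: "?w S = (1 - p) * subset_weight \<Omega> p S"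
    and weight_in: "?w (insert a S) = p * subset_weight \<Omega> p S" if "S \<subseteq> \<Omega>" for S
    using that assms by (simp_all add: subset_weight_def Suc_diff_le)
  have "subset_prob (insert a \<Omega>) p D = sum ?w (Pow \<Omega> \<inter> D) + sum ?w (insert a ` ?C)"
    unfolding subset_prob_def split using assms(1) disjoint by (simp add: sum.union_disjoint)
  also have "sum ?w (Pow \<Omega> \<inter> D) = (1 - p) * subset_prob \<Omega> p D"
    unfolding subset_prob_def sum_distrib_left using weight_out by (intro sum.cong) auto
  also have "sum ?w (insert a ` ?C) = p * subset_prob \<Omega> p {S. insert a S \<in> D}"
    unfolding subset_prob_def sum_distrib_left sum.reindex[OF inj]
    using weight_in by (intro sum.cong) auto
  finally show ?thesis .
qed

lemma subset_prob_UNIV: "finite \<Omega> \<Longrightarrow> subset_prob \<Omega> p UNIV = 1"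
  by (induction \<Omega> rule: finite_induct) (simp_all add: subset_prob_empty subset_prob_insert)

lemma subset_prob_Compl:
  assumes "finite \<Omega>"
  shows "subset_prob \<Omega> p (- D) = 1 - subset_prob \<Omega> p D"
proof -
  have "subset_prob \<Omega> p UNIV = subset_prob \<Omega> p D + subset_prob \<Omega> p (- D)"
    unfolding subset_prob_def using assms by (simp add: sum.Int_Diff[of "Pow \<Omega>" _ D] Diff_eq)
  then show ?thesis
    using subset_prob_UNIV[OF assms] by simp
qed

lemma subset_prob_superset:
  "finite \<Omega> \<Longrightarrow> B \<subseteq> \<Omega> \<Longrightarrow> subset_prob \<Omega> p {R. B \<subseteq> R} = p ^ card B"
proof (induction \<Omega> arbitrary: B rule: finite_induct)
  case empty
  then show ?case by (simp add: subset_prob_empty)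
next
  case (insert a F)
  show ?case
  proof (cases "a \<in> B")
    case True
    have "finite B"
      using insert finite_subset by blast
    have "subset_prob F p {R. B \<subseteq> R} = 0"
      using True insert.hyps(2) by (auto simp: subset_prob_def intro!: sum.neutral)
    moreover have "{S. insert a S \<in> {R. B \<subseteq> R}} = {R. B - {a} \<subseteq> R}"
      by auto
    moreover have "subset_prob F p {R. B - {a} \<subseteq> R} = p ^ card (B - {a})"
      using insert by (intro insert.IH) auto
    moreover have "card B = Suc (card (B - {a}))"
      using \<open>finite B\<close> True by (rule card_Suc_Diff1[symmetric])
    ultimately show ?thesis
      by (simp add: subset_prob_insert[OF insert.hyps])
  next
    case False
    then have "{S. insert a S \<in> {R. B \<subseteq> R}} = {R. B \<subseteq> R}" and "B \<subseteq> F"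
      using insert.prems by auto
    then show ?thesis
      by (simp add: subset_prob_insert[OF insert.hyps] insert.IH algebra_simps)
  qed
qed

subsection \<open>The Harris inequality\<close>

lemma chebyshev_two_point:
  fixes p x0 x1 y0 y1 :: real
  assumes "0 \<le> p" "p \<le> 1" "x1 \<le> x0" "y1 \<le> y0"
  shows "((1 - p) * x0 + p * x1) * ((1 - p) * y0 + p * y1) \<le> (1 - p) * (x0 * y0) + p * (x1 * y1)"
proof -
  have "(1 - p) * (x0 * y0) + p * (x1 * y1) - ((1 - p) * x0 + p * x1) * ((1 - p) * y0 + p * y1)
      = p * (1 - p) * (x0 - x1) * (y0 - y1)"
    by (simp add: algebra_simps)
  moreover have "0 \<le> p * (1 - p) * (x0 - x1) * (y0 - y1)"
    using assms by simp
  ultimately show ?thesis by linarith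
qed

text \<open>Conditioning on the last element writes each probability as an average of two
  values, ordered because the families are down-closed, so Chebyshev's sum inequality applies.\<close>

theorem harris_inequality:
  assumes "finite \<Omega>" "0 \<le> p" "p \<le> 1" "down_closed D" "down_closed E"
  shows "subset_prob \<Omega> p D * subset_prob \<Omega> p E \<le> subset_prob \<Omega> p (D \<inter> E)"
  using assms(1,4,5)
proof (induction \<Omega> arbitrary: D E rule: finite_induct)
  case empty
  show ?case by (simp add: subset_prob_empty)
next
  case (insert a F)
  let ?P = "subset_prob F p"
  let ?D1 = "{S. insert a S \<in> D}" and ?E1 = "{S. insert a S \<in> E}"
  note D1 = down_closed_link[OF insert.prems(1), of a]
  note E1 = down_closed_link[OF insert.prems(2), of a]
  have "subset_prob (insert a F) p D * subset_prob (insert a F) p E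
      = ((1 - p) * ?P D + p * ?P ?D1) * ((1 - p) * ?P E + p * ?P ?E1)"
    by (simp add: subset_prob_insert insert.hyps)
  also have "\<dots> \<le> (1 - p) * (?P D * ?P E) + p * (?P ?D1 * ?P ?E1)"
    using D1 E1 assms(2,3) insert.hyps(1)
    by (intro chebyshev_two_point subset_prob_mono) auto
  also have "\<dots> \<le> (1 - p) * ?P (D \<inter> E) + p * ?P (?D1 \<inter> ?E1)"
    using insert assms(2,3) D1 E1 by (intro add_mono mult_left_mono) auto
  also have "?D1 \<inter> ?E1 = {S. insert a S \<in> D \<inter> E}"
    by auto
  finally show ?case
    by (simp add: subset_prob_insert insert.hyps)
qed

corollary harris_inequality_prod:
  assumes "finite \<Omega>" "0 \<le> p" "p \<le> 1" "finite I" "\<And>i. i \<in> I \<Longrightarrow> down_closed (D i)"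
  shows "(\<Prod>i\<in>I. subset_prob \<Omega> p (D i)) \<le> subset_prob \<Omega> p (\<Inter>i\<in>I. D i)"
  using assms(4,5)
proof (induction I rule: finite_induct)
  case empty
  then show ?case using subset_prob_UNIV[OF assms(1)] by simp
next
  case (insert j I)
  have "(\<Prod>i\<in>insert j I. subset_prob \<Omega> p (D i))
      \<le> subset_prob \<Omega> p (D j) * subset_prob \<Omega> p (\<Inter>i\<in>I. D i)"
    using insert subset_prob_nonneg[OF assms(2,3)] by (auto intro: mult_left_mono)
  also have "\<dots> \<le> subset_prob \<Omega> p (D j \<inter> (\<Inter>i\<in>I. D i))"
    using insert.prems assms(1-3) by (simp add: harris_inequality down_closed_Inter)
  finally show ?case by simp
qed

subsection \<open>Layer densities of down-closed families\<close>

definition layer :: "'a set \<Rightarrow> 'a set set \<Rightarrow> nat \<Rightarrow> 'a set set" where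
  "layer \<Omega> D k = {S \<in> D. S \<subseteq> \<Omega> \<and> card S = k}"

text \<open>Beyond the top layer, \<open>card \<Omega> choose k = 0\<close> and so \<open>layer_density \<Omega> D k = 0\<close>.\<close>

definition layer_density :: "'a set \<Rightarrow> 'a set set \<Rightarrow> nat \<Rightarrow> real" where
  "layer_density \<Omega> D k = card (layer \<Omega> D k) / (card \<Omega> choose k)"

lemma finite_layer: "finite \<Omega> \<Longrightarrow> finite (layer \<Omega> D k)"
  unfolding layer_def by (rule finite_subset[of _ "Pow \<Omega>"]) auto

lemma card_layer_le:
  assumes "finite \<Omega>"
  shows "card (layer \<Omega> D k) \<le> card \<Omega> choose k"
proof -
  have "card (layer \<Omega> D k) \<le> card {S. S \<subseteq> \<Omega> \<and> card S = k}"
    using assms by (intro card_mono) (auto simp: layer_def intro: finite_subset[of _ "Pow \<Omega>"])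
  then show ?thesis
    using n_subsets[OF assms] by simp
qed

lemma layer_density_le_1: "finite \<Omega> \<Longrightarrow> layer_density \<Omega> D k \<le> 1"
  using card_layer_le[of \<Omega> D k] by (simp add: layer_density_def divide_le_eq)

lemma insert_eq_of_card_Suc:
  assumes "finite T" "S \<subseteq> T" "card T = Suc (card S)"
  obtains x where "x \<in> T - S" "T = insert x S"
proof -
  have "card (T - S) = 1"
    using assms by (simp add: card_Diff_subset finite_subset)
  then obtain x where "T - S = {x}"
    by (rule card_1_singletonE)
  then show ?thesis
    using that assms(2) by blast
qed

lemma card_one_point_extensions_le:
  assumes "finite \<Omega>" "finite A" "\<And>S. S \<in> A \<Longrightarrow> S \<subseteq> \<Omega> \<and> card S = k"
  shows "card (SIGMA S:A. (\<lambda>x. insert x S) ` (\<Omega> - S)) \<le> card A * (card \<Omega> - k)"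
proof -
  have "card (SIGMA S:A. (\<lambda>x. insert x S) ` (\<Omega> - S))
      = (\<Sum>S\<in>A. card ((\<lambda>x. insert x S) ` (\<Omega> - S)))"
    using assms(1,2) by (intro card_SigmaI ballI finite_imageI) auto
  also have "\<dots> \<le> (\<Sum>S\<in>A. card \<Omega> - k)"
  proof (rule sum_mono)
    fix S assume "S \<in> A"
    then have "S \<subseteq> \<Omega>" "card S = k"
      using assms(3) by auto
    then have "card (\<Omega> - S) = card \<Omega> - k"
      using assms(1) by (simp add: card_Diff_subset finite_subset)
    then show "card ((\<lambda>x. insert x S) ` (\<Omega> - S)) \<le> card \<Omega> - k"
      using card_image_le[of "\<Omega> - S" "\<lambda>x. insert x S"] assms(1) by simp
  qed
  finally show ?thesis
    by simp
qed

text \<open>Double counting the pairs \<open>S \<subset> T\<close> with \<open>T \<in> D\<close> of size \<open>k + 1\<close>: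
  each such \<open>T\<close> has \<open>k + 1\<close> subsets of size \<open>k\<close>, all in \<open>D\<close>, while each
  \<open>S \<in> D\<close> of size \<open>k\<close> extends in at most \<open>n - k\<close> ways.\<close>

lemma card_layer_Suc_le:
  assumes "finite \<Omega>" "down_closed D"
  shows "card (layer \<Omega> D (Suc k)) * Suc k \<le> card (layer \<Omega> D k) * (card \<Omega> - k)"
proof -
  define P where "P = (SIGMA T:layer \<Omega> D (Suc k). {S. S \<subseteq> T \<and> card S = k})"
  define Q where "Q = (SIGMA S:layer \<Omega> D k. (\<lambda>x. insert x S) ` (\<Omega> - S))"
  have layer_member: "T \<subseteq> \<Omega>" "finite T" "card T = j" if "T \<in> layer \<Omega> D j" for T j
    using that assms(1) finite_subset unfolding layer_def by blast+
  have "card P = (\<Sum>T\<in>layer \<Omega> D (Suc k). card {S. S \<subseteq> T \<and> card S = k})"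
    unfolding P_def using assms(1) layer_member(2)
    by (intro card_SigmaI finite_layer ballI finite_Collect_conjI finite_Collect_subsets) auto
  also have "\<dots> = card (layer \<Omega> D (Suc k)) * Suc k"
    using layer_member(2,3) by (simp add: n_subsets)
  finally have card_P: "card P = card (layer \<Omega> D (Suc k)) * Suc k" .
  have "(S, T) \<in> Q" if T: "T \<in> layer \<Omega> D (Suc k)" and S: "S \<subseteq> T" "card S = k" for S T
  proof -
    have "card T = Suc (card S)"
      using layer_member(3)[OF T] S(2) by simp
    then obtain x where x: "x \<in> T - S" "T = insert x S"
      using insert_eq_of_card_Suc[OF layer_member(2)[OF T] S(1)] by blast
    have "S \<in> layer \<Omega> D k"
      using T S down_closedD[OF assms(2)] by (auto simp: layer_def)
    then show ?thesis
      using x layer_member(1)[OF T] unfolding Q_def by auto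
  qed
  then have "prod.swap ` P \<subseteq> Q"
    unfolding P_def by force
  moreover have "finite Q"
    unfolding Q_def using assms(1) by (intro finite_SigmaI finite_layer finite_imageI) auto
  ultimately have "card (prod.swap ` P) \<le> card Q"
    by (rule card_mono[rotated])
  then have "card P \<le> card Q"
    by (simp add: card_image)
  also have "card Q \<le> card (layer \<Omega> D k) * (card \<Omega> - k)"
    unfolding Q_def using assms(1) layer_member(1,3)
    by (intro card_one_point_extensions_le finite_layer) blast+
  finally show ?thesis
    using card_P by simp
qed

lemma layer_density_Suc_le:
  assumes "finite \<Omega>" "down_closed D"
  shows "layer_density \<Omega> D (Suc k) \<le> layer_density \<Omega> D k"
proof (cases "k < card \<Omega>")
  case False
  then show ?thesis
    by (simp add: layer_density_def binomial_eq_0)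
next
  case True
  define n where "n = card \<Omega>"
  have "(n choose Suc k) * Suc k = (n choose k) * (n - k)"
    using binomial_absorb_comp[of n k] binomial_absorption[of k n] by (simp add: mult.commute)
  then have binomial: "real (n choose Suc k) * Suc k = real (n choose k) * real (n - k)"
    by (metis of_nat_mult)
  have count: "real (card (layer \<Omega> D (Suc k))) * real (Suc k) \<le> real (card (layer \<Omega> D k)) * real (n - k)"
    using card_layer_Suc_le[OF assms, of k] unfolding n_def by (metis of_nat_le_iff of_nat_mult)
  have positive: "0 < real (n choose k) * real (n - k)"
    using True by (simp add: n_def)
  have "layer_density \<Omega> D (Suc k)
      = real (card (layer \<Omega> D (Suc k))) * real (Suc k) / (real (n choose k) * real (n - k))"
    unfolding layer_density_def n_def[symmetric] binomial[symmetric]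
    by (rule mult_divide_mult_cancel_right[symmetric]) simp
  also have "\<dots> \<le> real (card (layer \<Omega> D k)) * real (n - k) / (real (n choose k) * real (n - k))"
    using count positive by (intro divide_right_mono) auto
  also have "\<dots> = layer_density \<Omega> D k"
    unfolding layer_density_def n_def[symmetric]
    using True by (intro mult_divide_mult_cancel_right) (simp add: n_def)
  finally show ?thesis .
qed

lemma layer_density_antimono:
  assumes "finite \<Omega>" "down_closed D" "j \<le> k"
  shows "layer_density \<Omega> D k \<le> layer_density \<Omega> D j"
  using lift_Suc_antimono_le[of "layer_density \<Omega> D"] layer_density_Suc_le[OF assms(1,2)] assms(3)
  by blast

lemma measure_pmf_of_set_subsets_eq_layer_density:
  assumes "finite \<Omega>" "m \<le> card \<Omega>"
  shows "measure_pmf.prob (pmf_of_set {R. R \<subseteq> \<Omega> \<and> card R = m}) D = layer_density \<Omega> D m"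
proof -
  let ?M = "{R. R \<subseteq> \<Omega> \<and> card R = m}"
  have "card ?M = card \<Omega> choose m"
    using n_subsets[OF assms(1)] .
  moreover have "finite ?M"
    using assms(1) by (auto intro: finite_subset[of _ "Pow \<Omega>"])
  moreover have "?M \<inter> D = layer \<Omega> D m"
    by (auto simp: layer_def)
  moreover have "?M \<noteq> {}"
    using obtain_subset_with_card_n[OF assms(2)] by blast
  ultimately show ?thesis
    by (simp add: measure_pmf_of_set layer_density_def)
qed

lemma subset_prob_eq_sum_layers:
  assumes "finite \<Omega>"
  shows "subset_prob \<Omega> p D
           = (\<Sum>k\<le>card \<Omega>. real (card (layer \<Omega> D k)) * (p ^ k * (1 - p) ^ (card \<Omega> - k)))"
proof -
  have "subset_prob \<Omega> p D
      = (\<Sum>k\<le>card \<Omega>. \<Sum>S\<in>{S \<in> Pow \<Omega> \<inter> D. card S = k}. subset_weight \<Omega> p S)"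
    unfolding subset_prob_def using assms
    by (intro sum.group[symmetric]) (auto intro: card_mono)
  also have "\<dots> = (\<Sum>k\<le>card \<Omega>. \<Sum>S\<in>layer \<Omega> D k. p ^ k * (1 - p) ^ (card \<Omega> - k))"
  proof (rule sum.cong[OF refl])
    fix k
    have layer: "{S \<in> Pow \<Omega> \<inter> D. card S = k} = layer \<Omega> D k"
      by (auto simp: layer_def)
    show "(\<Sum>S\<in>{S \<in> Pow \<Omega> \<inter> D. card S = k}. subset_weight \<Omega> p S)
             = (\<Sum>S\<in>layer \<Omega> D k. p ^ k * (1 - p) ^ (card \<Omega> - k))"
      unfolding layer by (intro sum.cong refl) (simp add: layer_def subset_weight_def)
  qed
  finally show ?thesis
    by simp
qed

subsection \<open>A Chernoff bound for the binomial lower tail\<close>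

lemma sum_binomial_pmf:
  assumes "0 \<le> p" "p \<le> 1"
  shows "(\<Sum>k\<le>n. pmf (binomial_pmf n p) k * x ^ k) = (p * x + (1 - p)) ^ n"
proof -
  have "(p * x + (1 - p)) ^ n = (\<Sum>k\<le>n. real (n choose k) * (p * x) ^ k * (1 - p) ^ (n - k))"
    by (rule binomial_ring)
  then show ?thesis
    using assms by (simp add: power_mult_distrib mult_ac)
qed

lemma subset_prob_le_binomial_tail_plus_layer_density:
  assumes "finite \<Omega>" "down_closed D" "0 \<le> p" "p \<le> 1" "m \<le> card \<Omega>"
  shows "subset_prob \<Omega> p D
           \<le> measure_pmf.prob (binomial_pmf (card \<Omega>) p) {..<m} + layer_density \<Omega> D m"
proof -
  define n where "n = card \<Omega>"
  define b where "b k = pmf (binomial_pmf n p) k" for k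
  have "subset_prob \<Omega> p D = (\<Sum>k\<le>n. layer_density \<Omega> D k * b k)"
    unfolding subset_prob_eq_sum_layers[OF assms(1)] b_def n_def[symmetric]
    using assms(3,4) by (intro sum.cong) (simp_all add: layer_density_def n_def)
  also have "\<dots> \<le> (\<Sum>k\<le>n. (if k < m then b k else 0) + layer_density \<Omega> D m * b k)"
  proof (rule sum_mono)
    fix k
    have b_nonneg: "0 \<le> b k"
      by (simp add: b_def)
    show "layer_density \<Omega> D k * b k \<le> (if k < m then b k else 0) + layer_density \<Omega> D m * b k"
    proof (cases "k < m")
      case True
      have "layer_density \<Omega> D k * b k \<le> b k"
        using b_nonneg layer_density_le_1[OF assms(1)]
        by (intro mult_left_le_one_le) (simp_all add: layer_density_def)
      moreover have "0 \<le> layer_density \<Omega> D m * b k"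
        using b_nonneg by (simp add: layer_density_def)
      ultimately show ?thesis
        using True by simp
    next
      case False
      then show ?thesis
        using layer_density_antimono[OF assms(1,2), of m k] b_nonneg by (simp add: mult_right_mono)
    qed
  qed
  also have "\<dots> = (\<Sum>k<m. b k) + layer_density \<Omega> D m"
  proof -
    have "{k \<in> {..n}. k < m} = {..<m}"
      using assms(5) by (auto simp: n_def)
    moreover have "(\<Sum>k\<le>n. b k) = 1"
      using sum_binomial_pmf[OF assms(3,4), of n 1] by (simp add: b_def)
    ultimately show ?thesis
      by (simp add: sum.distrib sum_distrib_left[symmetric] sum.inter_filter[symmetric])
  qed
  also have "(\<Sum>k<m. b k) = measure_pmf.prob (binomial_pmf n p) {..<m}"
    by (simp add: b_def measure_measure_pmf_finite)
  finally show ?thesis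
    unfolding n_def .
qed

text \<open>Markov's inequality for \<open>r ^ X\<close>, \<open>0 < r \<le> 1\<close>, in the form of a sum.\<close>

lemma binomial_lower_tail_le:
  assumes "0 \<le> p" "p \<le> 1" "0 < r" "r \<le> 1"
  shows "measure_pmf.prob (binomial_pmf n p) {..<m} \<le> (p * r + (1 - p)) ^ n / r ^ m"
proof -
  let ?b = "pmf (binomial_pmf n p)"
  have "measure_pmf.prob (binomial_pmf n p) {..<m} = (\<Sum>k<m. ?b k)"
    by (simp add: measure_measure_pmf_finite)
  also have "\<dots> \<le> (\<Sum>k<m. ?b k * r ^ k / r ^ m)"
  proof (rule sum_mono)
    fix k assume "k \<in> {..<m}"
    then have "r ^ m \<le> r ^ k"
      using assms(3,4) by (intro power_decreasing) auto
    then show "?b k \<le> ?b k * r ^ k / r ^ m"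
      using assms(3) by (simp add: le_divide_eq mult_left_mono)
  qed
  also have "\<dots> \<le> (\<Sum>k\<in>{..<m} \<union> {..n}. ?b k * r ^ k / r ^ m)"
    using assms(3) by (intro sum_mono2) auto
  also have "\<dots> = (\<Sum>k\<le>n. ?b k * r ^ k / r ^ m)"
    using assms(1,2) by (intro sum.mono_neutral_right) auto
  also have "\<dots> = (p * r + (1 - p)) ^ n / r ^ m"
    unfolding sum_divide_distrib[symmetric] sum_binomial_pmf[OF assms(1,2)] ..
  finally show ?thesis .
qed

lemma one_plus_le_exp_minus_quarter_square:
  fixes x :: real
  assumes "0 \<le> x" "x \<le> 1"
  shows "1 + x \<le> exp (x - x\<^sup>2 / 4)"
proof -
  define y where "y = x - x\<^sup>2 / 4"
  have "x\<^sup>2 \<le> x"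
    using assms by (simp add: power2_eq_square mult_left_le_one_le)
  then have "0 \<le> y"
    unfolding y_def using assms by simp
  have "1 / 2 \<le> (1 - x / 4)\<^sup>2"
    using power_mono[of "3 / 4" "1 - x / 4" 2] assms by (simp add: power2_eq_square)
  moreover have "y\<^sup>2 = x\<^sup>2 * (1 - x / 4)\<^sup>2"
    unfolding y_def by (simp add: power2_eq_square algebra_simps)
  ultimately have "x\<^sup>2 / 4 \<le> y\<^sup>2 / 2"
    using mult_left_mono[of "1 / 2" "(1 - x / 4)\<^sup>2" "x\<^sup>2"] by simp
  then have "1 + x \<le> 1 + y + y\<^sup>2 / 2"
    unfolding y_def by simp
  also have "\<dots> \<le> exp y"
    using exp_lower_Taylor_quadratic[OF \<open>0 \<le> y\<close>] .
  finally show ?thesis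
    unfolding y_def .
qed

text \<open>Take \<open>r = 1 / (1 + \<eta>)\<close>: the bound becomes \<open>(1 + \<eta>) ^ m (1 - \<eta> m / n) ^ n\<close>.\<close>

lemma binomial_lower_tail_chernoff:
  fixes \<eta> :: real
  assumes "0 < \<eta>" "\<eta> < 1" "(1 + \<eta>) * m \<le> n"
  shows "measure_pmf.prob (binomial_pmf n ((1 + \<eta>) * m / n)) {..<m} \<le> exp (- (\<eta>\<^sup>2 * m / 4))"
proof (cases "m = 0")
  case False
  define p where "p = (1 + \<eta>) * m / n"
  have "0 < (1 + \<eta>) * m"
    using False assms(1) by simp
  then have "0 < n"
    using assms(3) by (metis of_nat_0_less_iff order_less_le_trans)
  then have p: "0 \<le> p" "p \<le> 1"
    using assms by (simp_all add: p_def)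
  have shrink: "0 \<le> \<eta> * m / n" "\<eta> * m / n \<le> 1"
    using assms \<open>0 < n\<close> by (simp_all add: field_simps)
  have "measure_pmf.prob (binomial_pmf n p) {..<m} \<le> (p * (1 / (1 + \<eta>)) + (1 - p)) ^ n / (1 / (1 + \<eta>)) ^ m"
    using assms by (intro binomial_lower_tail_le p) auto
  also have "p * (1 / (1 + \<eta>)) = m / n"
    using assms(1) by (simp add: p_def)
  also have "m / n + (1 - p) = 1 - \<eta> * m / n"
    using \<open>0 < n\<close> by (simp add: p_def field_simps)
  also have "(1 - \<eta> * m / n) ^ n / (1 / (1 + \<eta>)) ^ m = (1 + \<eta>) ^ m * (1 - \<eta> * m / n) ^ n"
    by (simp add: power_one_over)
  also have "\<dots> \<le> exp (\<eta> - \<eta>\<^sup>2 / 4) ^ m * exp (- (\<eta> * m / n)) ^ n"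
    using assms(1,2) shrink one_plus_le_exp_minus_quarter_square[of \<eta>]
    by (intro mult_mono power_mono) (auto simp: exp_ge_add_one_self[of "- (\<eta> * m / n)", simplified])
  also have "\<dots> = exp (- (\<eta>\<^sup>2 * m / 4))"
    using \<open>0 < n\<close> by (simp add: exp_of_nat_mult[symmetric] exp_add[symmetric] algebra_simps)
  finally show ?thesis
    unfolding p_def .
qed simp

theorem lemma3p2:
  fixes \<Omega> :: "'a set" and I :: "'i set" and B :: "'i \<Rightarrow> 'a set"
    and n m :: nat and \<eta> :: real
  assumes "finite \<Omega>" and "card \<Omega> = n"
    and "finite I" and "\<And>i. i \<in> I \<Longrightarrow> B i \<subseteq> \<Omega>"
    and "m \<le> n div 2"
    and "0 < \<eta>" and "\<eta> < 1"
  shows "measure_pmf.prob (pmf_of_set {R. R \<subseteq> \<Omega> \<and> card R = m})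
            {R. \<forall>i\<in>I. \<not> B i \<subseteq> R}
         \<ge> (\<Prod>i\<in>I. 1 - ((1 + \<eta>) * real m / real n) ^ card (B i))
            - exp (- (\<eta>^2 * real m / 4))"
proof -
  let ?D = "{R. \<forall>i\<in>I. \<not> B i \<subseteq> R}"
  have down: "down_closed ?D"
    unfolding down_closed_def by blast
  have m_le: "m \<le> card \<Omega>"
    using assms(2,5) by simp
  define p where "p = (1 + \<eta>) * real m / real n"
  have "(1 + \<eta>) * m \<le> 2 * real m"
    using assms(7) by (intro mult_right_mono) auto
  moreover have "2 * real m \<le> n"
    using assms(5) by linarith
  ultimately have n_large: "(1 + \<eta>) * m \<le> n"
    by linarith
  then have p: "0 \<le> p" "p \<le> 1"
    using assms(6) by (auto simp: p_def divide_le_eq)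
  have "(\<Prod>i\<in>I. 1 - p ^ card (B i)) = (\<Prod>i\<in>I. subset_prob \<Omega> p (- {R. B i \<subseteq> R}))"
    using assms(1,4) by (simp add: subset_prob_Compl subset_prob_superset)
  also have "\<dots> \<le> subset_prob \<Omega> p (\<Inter>i\<in>I. - {R. B i \<subseteq> R})"
    using assms(1,3) p by (intro harris_inequality_prod) (auto simp: down_closed_def)
  also have "(\<Inter>i\<in>I. - {R. B i \<subseteq> R}) = ?D"
    by auto
  also have "subset_prob \<Omega> p ?D \<le> measure_pmf.prob (binomial_pmf n p) {..<m} + layer_density \<Omega> ?D m"
    using subset_prob_le_binomial_tail_plus_layer_density[OF assms(1) down p m_le] assms(2)
    by simp
  also have "\<dots> \<le> exp (- (\<eta>\<^sup>2 * m / 4)) + layer_density \<Omega> ?D m"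
    using binomial_lower_tail_chernoff[OF assms(6,7) n_large] by (simp add: p_def)
  also have "layer_density \<Omega> ?D m = measure_pmf.prob (pmf_of_set {R. R \<subseteq> \<Omega> \<and> card R = m}) ?D"
    using measure_pmf_of_set_subsets_eq_layer_density[OF assms(1) m_le] by simp
  finally show ?thesis
    unfolding p_def by simp
qed

end
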